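(* Let $P$ be a positive opetope and let $P^{op}$ be the positive hypergraph obtained from $P$ by interchanging the values of $\gamma$ and $\delta$ on the faces of dimension $1$ (i.e. for $a\in P_1$, the codomain of $a$ in $P^{op}$ is the unique element of $\delta(a)$ and $\delta^{P^{op}}(a)=\{\gamma(a)\}$), leaving everything else unchanged. Then $P^{op}$ is a positive opetope.
   Context: A positive hypergraph $S$ consists of finite sets $S_k$ ($k\in\mathbb{N}$), only finitely many nonempty, functions $\gamma:S_{k+1}\to S_k$, and for each $k$ an assignment $\delta$ sending each $a\in S_{k+1}$ to a nonempty subset $\delta(a)\subseteq S_k$, with $\delta(a)$ a singleton for $a\in S_1$. A face is identified with its singleton; $\gamma(X)=\{\gamma(a):a\in X\}$, $\delta(X)=\bigcup_{a\in X}\delta(a)$. For $k>0$ the lower order $<^-$ on $S_k$ is the transitive closure of: $a\lhd b$ iff $\gamma(a)\in\delta(b)$. The upper order $<^+$ on $S_k$ is the transitive closure of: $a\lhd b$ iff there is $\alpha\in S_{k+1}$ with $a\in\delta(\alpha)$, $\gamma(\alpha)=b$; $a\perp^{\pm}b$ iff $a<^{\pm}b$ or $b<^{\pm}a$. A positive opetopic cardinal is a positive hypergraph with $S_0\ne\emptyset$ such that: globularity ($\gamma\gamma(a)=\gamma\delta(a)-\delta\delta(a)$, $\delta\gamma(a)=\delta\delta(a)-\gamma\delta(a)$ for $\dim a\ge2$); each $<^+$ is a strict order, linear on $S_0$; for $k>0$, $\perp^-\cap\perp^+=\emptyset$ on $S_k$; for $x\in S_{k-1}$, $\{a:\gamma(a)=x\}$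 and $\{a:x\in\delta(a)\}$ are linearly ordered by $<^+$. A positive opetope is a positive opetopic cardinal with $|P_m-\delta(P_{m+1})|\le1$ for all $m$. *)

theory Defs
  imports Main
begin

text \<open>Graded pieces S_k are the faces of
dimension k. Values of cod/dom on 0-dimensional faces or on non-faces are
irrelevant.\<close>

record 'a phg =
  faces :: "'a set"
  dim   :: "'a \<Rightarrow> nat"
  cod   :: "'a \<Rightarrow> 'a"
  dom   :: "'a \<Rightarrow> 'a set"

definition lvl :: "'a phg \<Rightarrow> nat \<Rightarrow> 'a set" where
  "lvl S k = {a \<in> faces S. dim S a = k}"

definition codS :: "'a phg \<Rightarrow> 'a set \<Rightarrow> 'a set" where
  "codS S X = cod S ` X"

definition domS :: "'a phg \<Rightarrow> 'a set \<Rightarrow> 'a set" where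
  "domS S X = (\<Union>a\<in>X. dom S a)"

definition positive_hypergraph :: "'a phg \<Rightarrow> bool" where
  "positive_hypergraph S \<longleftrightarrow>
     finite (faces S) \<and>
     (\<forall>k. \<forall>a \<in> lvl S (Suc k).
        cod S a \<in> lvl S k \<and> dom S a \<subseteq> lvl S k \<and> dom S a \<noteq> {}) \<and>
     (\<forall>a \<in> lvl S 1. card (dom S a) = 1)"

definition lower_gen :: "'a phg \<Rightarrow> nat \<Rightarrow> ('a \<times> 'a) set" where
  "lower_gen S k = {(a, b). a \<in> lvl S k \<and> b \<in> lvl S k \<and> cod S a \<in> dom S b}"

definition lower_ord :: "'a phg \<Rightarrow> nat \<Rightarrow> ('a \<times> 'a) set" where
  "lower_ord S k = (lower_gen S k)\<^sup>+"

definition upper_gen :: "'a phg \<Rightarrow> nat \<Rightarrow> ('a \<times> 'a) set" where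
  "upper_gen S k = {(a, b). a \<in> lvl S k \<and> b \<in> lvl S k \<and>
      (\<exists>\<alpha> \<in> lvl S (Suc k). a \<in> dom S \<alpha> \<and> cod S \<alpha> = b)}"

definition upper_ord :: "'a phg \<Rightarrow> nat \<Rightarrow> ('a \<times> 'a) set" where
  "upper_ord S k = (upper_gen S k)\<^sup>+"

definition comparable :: "('a \<times> 'a) set \<Rightarrow> 'a \<Rightarrow> 'a \<Rightarrow> bool" where
  "comparable R a b \<longleftrightarrow> (a, b) \<in> R \<or> (b, a) \<in> R"

definition linear_on :: "('a \<times> 'a) set \<Rightarrow> 'a set \<Rightarrow> bool" where
  "linear_on R X \<longleftrightarrow> (\<forall>a \<in> X. \<forall>b \<in> X. a \<noteq> b \<longrightarrow> comparable R a b)"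

definition positive_opetopic_cardinal :: "'a phg \<Rightarrow> bool" where
  "positive_opetopic_cardinal S \<longleftrightarrow>
     positive_hypergraph S \<and>
     lvl S 0 \<noteq> {} \<and>
     \<comment> \<open>globularity\<close>
     (\<forall>a \<in> faces S. dim S a \<ge> 2 \<longrightarrow>
        {cod S (cod S a)} = codS S (dom S a) - domS S (dom S a) \<and>
        dom S (cod S a) = domS S (dom S a) - codS S (dom S a)) \<and>
     \<comment> \<open>each upper order is a strict order\<close>
     (\<forall>k. irrefl (upper_ord S k)) \<and>
     \<comment> \<open>linear on S_0\<close>
     linear_on (upper_ord S 0) (lvl S 0) \<and>
     \<comment> \<open>disjointness of lower and upper comparability\<close>
     (\<forall>k > 0. \<forall>a \<in> lvl S k. \<forall>b \<in> lvl S k.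
        \<not> (comparable (lower_ord S k) a b \<and> comparable (upper_ord S k) a b)) \<and>
     \<comment> \<open>fibres linearly ordered by the upper order\<close>
     (\<forall>k. \<forall>x \<in> lvl S k.
        linear_on (upper_ord S (Suc k)) {a \<in> lvl S (Suc k). cod S a = x} \<and>
        linear_on (upper_ord S (Suc k)) {a \<in> lvl S (Suc k). x \<in> dom S a})"

definition positive_opetope :: "'a phg \<Rightarrow> bool" where
  "positive_opetope P \<longleftrightarrow>
     positive_opetopic_cardinal P \<and>
     (\<forall>m. card (lvl P m - domS P (lvl P (Suc m))) \<le> 1)"

definition op_phg :: "'a phg \<Rightarrow> 'a phg" where
  "op_phg P = P\<lparr> cod := (\<lambda>a. if dim P a = 1 then the_elem (dom P a) else cod P a),
                 dom := (\<lambda>a. if dim P a = 1 then {cod P a} else dom P a) \<rparr>"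

end

theory Submission
  imports Defs
begin

text \<open>Reversing the edges of P only changes the combinatorics in dimensions 0 and 1:
the upper order on vertices is reversed, the lower order on edges is reversed, and the
two fibres of a vertex (edges ending at it, edges starting at it) are exchanged. Every
axiom is invariant under these changes; in dimension 2 the two globularity equations
trade places. The only axiom that does not transfer formally is the bound on vertices
outside the domains of edges: in P^op these are the vertices that are not targets of
edges in P, and there is at most one because such vertices are minimal for the upper
order, which is linear on vertices.\<close>

lemma faces_op_phg [simp]: "faces (op_phg P) = faces P"
  and dim_op_phg [simp]: "dim (op_phg P) = dim P"
  and lvl_op_phg [simp]: "lvl (op_phg P) k = lvl P k"
  by (simp_all add: op_phg_def lvl_def)

lemma cod_op_phg: "cod (op_phg P) a = (if dim P a = 1 then the_elem (dom P a) else cod P a)"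
  and dom_op_phg: "dom (op_phg P) a = (if dim P a = 1 then {cod P a} else dom P a)"
  by (simp_all add: op_phg_def)

lemma dim_lvl: "a \<in> lvl P k \<Longrightarrow> dim P a = k"
  by (simp add: lvl_def)

lemma op_phg_unchanged:
  assumes "a \<in> lvl P k" "k \<noteq> 1"
  shows "cod (op_phg P) a = cod P a" "dom (op_phg P) a = dom P a"
  using assms by (simp_all add: cod_op_phg dom_op_phg dim_lvl)

lemma op_phg_unchanged_sets:
  assumes "X \<subseteq> lvl P k" "k \<noteq> 1"
  shows "codS (op_phg P) X = codS P X" "domS (op_phg P) X = domS P X"
proof -
  have "cod (op_phg P) a = cod P a" "dom (op_phg P) a = dom P a" if "a \<in> X" for a
    using assms that op_phg_unchanged[of a P k] by auto
  then show "codS (op_phg P) X = codS P X" "domS (op_phg P) X = domS P X"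
    unfolding codS_def domS_def by simp_all
qed

lemma comparable_converse [simp]: "comparable (r\<inverse>) a b = comparable r a b"
  by (auto simp: comparable_def)

lemma linear_on_converse [simp]: "linear_on (r\<inverse>) X = linear_on r X"
  by (simp add: linear_on_def)

lemma card_unreached_le_1:
  assumes "linear_on R X" "Range R \<subseteq> T"
  shows "card (X - T) \<le> 1"
proof -
  have "y = z" if "y \<in> X - T" "z \<in> X - T" for y z
    using that assms unfolding linear_on_def comparable_def by blast
  then show ?thesis
    by (cases "finite (X - T)") (auto simp: card_le_Suc0_iff_eq)
qed

context
  fixes P :: "'a phg"
  assumes hypergraph: "positive_hypergraph P"
begin

lemma op_phg_edge:
  assumes "a \<in> lvl P 1"
  shows "dom P a = {cod (op_phg P) a}" "dom (op_phg P) a = {cod P a}"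
proof -
  have "card (dom P a) = 1" using hypergraph assms by (simp add: positive_hypergraph_def)
  then obtain x where "dom P a = {x}" by (auto simp: card_Suc_eq)
  then show "dom P a = {cod (op_phg P) a}" "dom (op_phg P) a = {cod P a}"
    using assms by (simp_all add: cod_op_phg dom_op_phg dim_lvl)
qed

lemma op_phg_edge_sets:
  assumes "X \<subseteq> lvl P 1"
  shows "codS (op_phg P) X = domS P X" "domS (op_phg P) X = codS P X"
proof -
  have "dom P a = {cod (op_phg P) a}" "dom (op_phg P) a = {cod P a}" if "a \<in> X" for a
    using assms that op_phg_edge by auto
  then show "codS (op_phg P) X = domS P X" "domS (op_phg P) X = codS P X"
    unfolding codS_def domS_def by auto
qed

lemma positive_hypergraph_op_phg: "positive_hypergraph (op_phg P)"
proof -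
  have "cod (op_phg P) a \<in> lvl P k \<and> dom (op_phg P) a \<subseteq> lvl P k \<and> dom (op_phg P) a \<noteq> {}"
    if a: "a \<in> lvl P (Suc k)" for a k
  proof -
    have "cod P a \<in> lvl P k" "dom P a \<subseteq> lvl P k" "dom P a \<noteq> {}"
      using hypergraph a by (auto simp: positive_hypergraph_def)
    then show ?thesis
      using a op_phg_edge[of a] op_phg_unchanged[OF a] by (cases k) auto
  qed
  moreover have "card (dom (op_phg P) a) = 1" if "a \<in> lvl P 1" for a
    using op_phg_edge(2)[OF that] by simp
  ultimately show ?thesis
    using hypergraph by (simp add: positive_hypergraph_def)
qed

lemma upper_gen_op_phg_0: "upper_gen (op_phg P) 0 = (upper_gen P 0)\<inverse>"
  unfolding upper_gen_def lvl_op_phg using op_phg_edge by auto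

lemma upper_gen_op_phg_Suc: "upper_gen (op_phg P) (Suc k) = upper_gen P (Suc k)"
  unfolding upper_gen_def lvl_op_phg by (auto simp: op_phg_unchanged)

lemma upper_ord_op_phg_0: "upper_ord (op_phg P) 0 = (upper_ord P 0)\<inverse>"
  by (simp add: upper_ord_def upper_gen_op_phg_0 trancl_converse)

lemma upper_ord_op_phg_Suc: "upper_ord (op_phg P) (Suc k) = upper_ord P (Suc k)"
  by (simp add: upper_ord_def upper_gen_op_phg_Suc)

lemma irrefl_upper_ord_op_phg: "irrefl (upper_ord (op_phg P) k) = irrefl (upper_ord P k)"
  by (cases k) (auto simp: upper_ord_op_phg_0 upper_ord_op_phg_Suc irrefl_def)

lemma comparable_upper_ord_op_phg:
  "comparable (upper_ord (op_phg P) k) a b = comparable (upper_ord P k) a b"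
  by (cases k) (simp_all add: upper_ord_op_phg_0 upper_ord_op_phg_Suc)

lemma lower_gen_op_phg_1: "lower_gen (op_phg P) 1 = (lower_gen P 1)\<inverse>"
  unfolding lower_gen_def lvl_op_phg using op_phg_edge by auto

lemma lower_gen_op_phg_ge_2: "k \<ge> 2 \<Longrightarrow> lower_gen (op_phg P) k = lower_gen P k"
  unfolding lower_gen_def lvl_op_phg by (auto simp: op_phg_unchanged)

lemma comparable_lower_ord_op_phg:
  assumes "k > 0"
  shows "comparable (lower_ord (op_phg P) k) a b = comparable (lower_ord P k) a b"
proof (cases "k = 1")
  case True
  then show ?thesis
    by (simp only: lower_ord_def lower_gen_op_phg_1 trancl_converse comparable_converse)
next
  case False
  with assms show ?thesis by (simp add: lower_ord_def lower_gen_op_phg_ge_2)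
qed

lemma globular_op_phg:
  assumes a: "a \<in> faces P" "2 \<le> dim P a"
    and glob_cod: "{cod P (cod P a)} = codS P (dom P a) - domS P (dom P a)"
    and glob_dom: "dom P (cod P a) = domS P (dom P a) - codS P (dom P a)"
  shows "{cod (op_phg P) (cod (op_phg P) a)}
           = codS (op_phg P) (dom (op_phg P) a) - domS (op_phg P) (dom (op_phg P) a) \<and>
         dom (op_phg P) (cod (op_phg P) a)
           = domS (op_phg P) (dom (op_phg P) a) - codS (op_phg P) (dom (op_phg P) a)"
proof -
  obtain k where k: "a \<in> lvl P (Suc k)" "k \<ge> 1"
    using a by (cases "dim P a") (auto simp: lvl_def)
  have boundary: "cod P a \<in> lvl P k" "dom P a \<subseteq> lvl P k"
    using hypergraph k(1) by (auto simp: positive_hypergraph_def)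
  have unchanged_a: "cod (op_phg P) a = cod P a" "dom (op_phg P) a = dom P a"
    using op_phg_unchanged[OF k(1)] k(2) by simp_all
  show ?thesis
  proof (cases "k = 1")
    case True
    then show ?thesis
      using boundary glob_cod glob_dom op_phg_edge[of "cod P a"]
        op_phg_edge_sets[of "dom P a"] unchanged_a by auto
  next
    case False
    then show ?thesis
      using boundary glob_cod glob_dom op_phg_unchanged[of "cod P a" P k]
        op_phg_unchanged_sets[of "dom P a" P k] unchanged_a by auto
  qed
qed

lemma linear_fibres_op_phg:
  assumes "x \<in> lvl P k"
    and "linear_on (upper_ord P (Suc k)) {a \<in> lvl P (Suc k). cod P a = x}"
    and "linear_on (upper_ord P (Suc k)) {a \<in> lvl P (Suc k). x \<in> dom P a}"
  shows "linear_on (upper_ord (op_phg P) (Suc k)) {a \<in> lvl P (Suc k). cod (op_phg P) a = x}"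
    and "linear_on (upper_ord (op_phg P) (Suc k)) {a \<in> lvl P (Suc k). x \<in> dom (op_phg P) a}"
proof -
  have "{a \<in> lvl P (Suc k). cod (op_phg P) a = x}
      = (if k = 0 then {a \<in> lvl P (Suc k). x \<in> dom P a} else {a \<in> lvl P (Suc k). cod P a = x})"
    "{a \<in> lvl P (Suc k). x \<in> dom (op_phg P) a}
      = (if k = 0 then {a \<in> lvl P (Suc k). cod P a = x} else {a \<in> lvl P (Suc k). x \<in> dom P a})"
    using op_phg_edge op_phg_unchanged[of _ P "Suc k"] by auto
  with assms show "linear_on (upper_ord (op_phg P) (Suc k)) {a \<in> lvl P (Suc k). cod (op_phg P) a = x}"
    "linear_on (upper_ord (op_phg P) (Suc k)) {a \<in> lvl P (Suc k). x \<in> dom (op_phg P) a}"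
    by (simp_all add: upper_ord_op_phg_Suc split: if_splits)
qed

end

lemma card_non_target_vertices_le_1:
  assumes "positive_opetopic_cardinal P"
  shows "card (lvl P 0 - codS P (lvl P 1)) \<le> 1"
proof (rule card_unreached_le_1)
  show "linear_on (upper_ord P 0) (lvl P 0)"
    using assms by (simp add: positive_opetopic_cardinal_def)
  show "Range (upper_ord P 0) \<subseteq> codS P (lvl P 1)"
    unfolding upper_ord_def trancl_range by (auto simp: upper_gen_def codS_def)
qed

lemma positive_opetopic_cardinal_op_phg:
  assumes cardinal: "positive_opetopic_cardinal P"
  shows "positive_opetopic_cardinal (op_phg P)"
proof -
  have hypergraph: "positive_hypergraph P"
    using cardinal by (simp add: positive_opetopic_cardinal_def)
  have "\<forall>a \<in> faces P. dim P a \<ge> 2 \<longrightarrow>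
        {cod (op_phg P) (cod (op_phg P) a)}
           = codS (op_phg P) (dom (op_phg P) a) - domS (op_phg P) (dom (op_phg P) a) \<and>
        dom (op_phg P) (cod (op_phg P) a)
           = domS (op_phg P) (dom (op_phg P) a) - codS (op_phg P) (dom (op_phg P) a)"
    using cardinal globular_op_phg[OF hypergraph] by (simp add: positive_opetopic_cardinal_def)
  moreover have "\<forall>k. \<forall>x \<in> lvl P k.
        linear_on (upper_ord (op_phg P) (Suc k)) {a \<in> lvl P (Suc k). cod (op_phg P) a = x} \<and>
        linear_on (upper_ord (op_phg P) (Suc k)) {a \<in> lvl P (Suc k). x \<in> dom (op_phg P) a}"
    using cardinal linear_fibres_op_phg[OF hypergraph] by (simp add: positive_opetopic_cardinal_def)
  moreover have "\<forall>k > 0. \<forall>a \<in> lvl P k. \<forall>b \<in> lvl P k.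
        \<not> (comparable (lower_ord (op_phg P) k) a b \<and> comparable (upper_ord (op_phg P) k) a b)"
    using cardinal by (simp add: positive_opetopic_cardinal_def
        comparable_lower_ord_op_phg[OF hypergraph] comparable_upper_ord_op_phg[OF hypergraph])
  moreover have "\<forall>k. irrefl (upper_ord (op_phg P) k)"
    using cardinal by (simp add: positive_opetopic_cardinal_def irrefl_upper_ord_op_phg[OF hypergraph])
  moreover have "linear_on (upper_ord (op_phg P) 0) (lvl P 0)" "lvl P 0 \<noteq> {}"
    using cardinal by (simp_all add: positive_opetopic_cardinal_def upper_ord_op_phg_0[OF hypergraph])
  ultimately show ?thesis
    unfolding positive_opetopic_cardinal_def lvl_op_phg faces_op_phg dim_op_phg
    using positive_hypergraph_op_phg[OF hypergraph] by blast
qed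

theorem mainTheorem9:
  assumes "positive_opetope P"
  shows "positive_opetope (op_phg P)"
proof -
  have cardinal: "positive_opetopic_cardinal P"
    and opetope: "\<forall>m. card (lvl P m - domS P (lvl P (Suc m))) \<le> 1"
    using assms by (simp_all add: positive_opetope_def)
  then have hypergraph: "positive_hypergraph P"
    by (simp add: positive_opetopic_cardinal_def)
  have "card (lvl P m - domS (op_phg P) (lvl P (Suc m))) \<le> 1" for m
    using opetope card_non_target_vertices_le_1[OF cardinal] op_phg_edge_sets(2)[OF hypergraph]
      op_phg_unchanged_sets[of "lvl P (Suc m)" P "Suc m"]
    by (cases m) auto
  then show ?thesis
    using positive_opetopic_cardinal_op_phg[OF cardinal] by (simp add: positive_opetope_def)
qed

end
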